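(* Let $F$ be any finite subset of $\mathbb{N}$ and $a_k$ a positive integer for each $k \in F$. Then there exist a continuous map $f : \mathbb{R}^2 \to \mathbb{R}^2$ and a fixed point $p$ of $f$ such that $\{p\}$ is an isolated invariant set and $$i(f^n,p) = 1 - \sum_{k \in F,\ k\mid n} k\,a_k \quad \text{for every } n \ge 1,$$ i.e. $\{i(f^n,p)\}_{n\ge1} = \sigma^1 - \sum_{k\in F} a_k\sigma^k$.
   Context: $i(g,p)$ is the fixed point index; $\sigma^k_n = k$ if $k\mid n$ and $0$ otherwise. $\{p\}$ is an isolated invariant set if there is a compact $N$ with $\{p\} = \mathrm{Inv}(f,N) \subset \mathrm{int}(N)$, where $\mathrm{Inv}(f,N)$ is the set of $x \in N$ admitting a sequence $(x_n)_{n\in\mathbb{Z}}\subset N$ with $x_0=x$, $f(x_n)=x_{n+1}$. *)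

theory Defs
  imports "HOL-Analysis.Analysis"
begin

text \<open>The plane R^2 is identified with the complex numbers.\<close>

definition winding_lift :: "(real \<Rightarrow> complex) \<Rightarrow> complex \<Rightarrow> real" where
  "winding_lift \<gamma> z = (THE w. \<exists>\<theta>. continuous_on {0..1} \<theta> \<and>
      (\<forall>t\<in>{0..1}. \<gamma> t - z = complex_of_real (cmod (\<gamma> t - z)) * exp (\<i> * complex_of_real (\<theta> t))) \<and>
      w = (\<theta> 1 - \<theta> 0) / (2 * pi))"

definition fp_index :: "(complex \<Rightarrow> complex) \<Rightarrow> complex \<Rightarrow> int" where
  "fp_index g p = (THE k::int. \<exists>\<epsilon>>0. \<forall>r. 0 < r \<and> r < \<epsilon> \<longrightarrow>
      winding_lift (\<lambda>t. let x = p + complex_of_real r * exp (2 * pi * \<i> * complex_of_real t) in x - g x) 0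
        = real_of_int k)"

definition Inv :: "('a \<Rightarrow> 'a) \<Rightarrow> 'a set \<Rightarrow> 'a set" where
  "Inv f N = {x \<in> N. \<exists>s::int \<Rightarrow> 'a. s 0 = x \<and> (\<forall>n. s n \<in> N \<and> f (s n) = s (n + 1))}"

definition isolated_invariant_set :: "('a::topological_space \<Rightarrow> 'a) \<Rightarrow> 'a set \<Rightarrow> bool" where
  "isolated_invariant_set f S \<longleftrightarrow> (\<exists>N. compact N \<and> S = Inv f N \<and> S \<subseteq> interior N)"

end

theory Submission
  imports Defs "HOL-Complex_Analysis.Complex_Analysis"
begin

text \<open>Let \<open>\<sigma>\<close> be the permutation of \<open>P = {(k, i, m). k \<in> F, i < a\<^sub>k, m < k}\<close> that
  rotates each block of length \<open>k\<close> cyclically, so that \<open>\<sigma>\<^sup>n\<close> has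
  \<open>\<Sum>\<^bsub>k\<in>F, k dvd n\<^esub> k a\<^sub>k\<close> fixed points. Give every \<open>p \<in> P\<close> its own direction
  \<open>u p\<close> on the unit circle and a thin sector (petal) around it. The map \<open>f\<close> vanishes outside
  the petals and sends the petal of \<open>p\<close> onto the petal of \<open>\<sigma> p\<close>, doubling the distance to 0.
  Hence \<open>f\<^sup>n\<close> sends petal \<open>p\<close> to petal \<open>\<sigma>\<^sup>n p\<close>, stretching by \<open>2\<^sup>n\<close>. Since the petals are
  disjoint, on a circle around 0 the vector field \<open>z - f\<^sup>n z\<close> is \<open>z\<close> times one factor per
  petal. The factor of a petal not fixed by \<open>\<sigma>\<^sup>n\<close> deforms to 1, while a fixed petal is
  repelling and its factor winds once negatively, so \<open>i(f\<^sup>n, 0) = 1 - #Fix(\<sigma>\<^sup>n)\<close>.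
  A full orbit in the unit disc stays at 0, because a point in a petal is pushed out by the
  factor \<open>2\<^sup>n\<close>; so \<open>{0}\<close> is an isolated invariant set.\<close>

lemma argument_lift_increment_unique:
  fixes \<gamma> :: "real \<Rightarrow> complex"
  assumes "continuous_on {0..1} \<theta>" "continuous_on {0..1} \<theta>'"
    and "\<forall>t\<in>{0..1}. \<gamma> t - z = complex_of_real (cmod (\<gamma> t - z)) * exp (\<i> * complex_of_real (\<theta> t))"
    and "\<forall>t\<in>{0..1}. \<gamma> t - z = complex_of_real (cmod (\<gamma> t - z)) * exp (\<i> * complex_of_real (\<theta>' t))"
    and "\<forall>t\<in>{0..1}. \<gamma> t \<noteq> z"
  shows "\<theta>' 1 - \<theta>' 0 = \<theta> 1 - \<theta> 0"
proof -
  define d where "d t = (\<theta> t - \<theta>' t) / (2 * pi)" for t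
  have d_int: "d t \<in> \<int>" if "t \<in> {0..1}" for t
  proof -
    have "exp (\<i> * complex_of_real (\<theta> t)) = exp (\<i> * complex_of_real (\<theta>' t))"
      using assms(3-5) that by (metis mult_cancel_left norm_eq_zero of_real_eq_0_iff right_minus_eq)
    then have "exp (\<i> * complex_of_real (\<theta> t - \<theta>' t)) = 1"
      by (simp add: right_diff_distrib exp_diff)
    then obtain n :: int where "\<theta> t - \<theta>' t = of_int (2 * n) * pi"
      by (auto simp: exp_eq_1)
    then show ?thesis by (simp add: d_def)
  qed
  have "d constant_on {0..1}"
  proof (rule continuous_discrete_range_constant)
    show "continuous_on {0..1} d"
      unfolding d_def using assms(1,2) by (intro continuous_intros) auto
    show "\<exists>e>0. \<forall>y. y \<in> {0..1} \<and> d y \<noteq> d x \<longrightarrow> e \<le> norm (d y - d x)" if "x \<in> {0..1}" for x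
      using d_int that by (intro exI[of _ 1]) (auto intro!: Ints_nonzero_abs_ge1 Ints_diff)
  qed simp
  then have "d 1 = d 0" by (auto simp: constant_on_def)
  then show ?thesis by (simp add: d_def field_simps)
qed

lemma winding_lift_eq_winding_number:
  assumes "path \<gamma>" "0 \<notin> path_image \<gamma>"
  shows "winding_lift \<gamma> 0 = Re (winding_number \<gamma> 0)"
proof -
  obtain q where q: "path q" "pathfinish q - pathstart q = 2 * of_real pi * \<i> * winding_number \<gamma> 0"
    "\<And>t. t \<in> {0..1} \<Longrightarrow> \<gamma> t = 0 + exp (q t)"
    using winding_number_as_continuous_log[OF assms] by blast
  define \<theta> where "\<theta> t = Im (q t)" for t
  have lift: "continuous_on {0..1} \<theta> \<and>
      (\<forall>t\<in>{0..1}. \<gamma> t - 0 = complex_of_real (cmod (\<gamma> t - 0)) * exp (\<i> * complex_of_real (\<theta> t)))"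
  proof
    show "continuous_on {0..1} \<theta>"
      unfolding \<theta>_def using q(1) unfolding path_def by (intro continuous_intros)
    show "\<forall>t\<in>{0..1}. \<gamma> t - 0 = complex_of_real (cmod (\<gamma> t - 0)) * exp (\<i> * complex_of_real (\<theta> t))"
    proof
      fix t :: real assume "t \<in> {0..1}"
      then have "\<gamma> t = exp (complex_of_real (Re (q t)) + \<i> * complex_of_real (Im (q t)))"
        using q(3) complex_eq[of "q t"] by simp
      then show "\<gamma> t - 0 = complex_of_real (cmod (\<gamma> t - 0)) * exp (\<i> * complex_of_real (\<theta> t))"
        by (simp add: \<theta>_def exp_add exp_of_real norm_mult)
    qed
  qed
  have increment: "(\<theta> 1 - \<theta> 0) / (2 * pi) = Re (winding_number \<gamma> 0)"
    using arg_cong[OF q(2), of Im] by (simp add: \<theta>_def pathfinish_def pathstart_def)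
  have avoids: "\<forall>t\<in>{0..1}. \<gamma> t \<noteq> 0"
    using assms(2) by (auto simp: path_image_def)
  show ?thesis
    unfolding winding_lift_def
  proof (rule the_equality)
    show "\<exists>\<theta>. continuous_on {0..1} \<theta> \<and>
        (\<forall>t\<in>{0..1}. \<gamma> t - 0 = complex_of_real (cmod (\<gamma> t - 0)) * exp (\<i> * complex_of_real (\<theta> t))) \<and>
        Re (winding_number \<gamma> 0) = (\<theta> 1 - \<theta> 0) / (2 * pi)"
      using lift increment by metis
  next
    fix w
    assume "\<exists>\<theta>'. continuous_on {0..1} \<theta>' \<and>
        (\<forall>t\<in>{0..1}. \<gamma> t - 0 = complex_of_real (cmod (\<gamma> t - 0)) * exp (\<i> * complex_of_real (\<theta>' t))) \<and>
        w = (\<theta>' 1 - \<theta>' 0) / (2 * pi)"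
    then show "w = Re (winding_number \<gamma> 0)"
      using argument_lift_increment_unique[of \<theta>] lift avoids increment by metis
  qed
qed

lemma fp_index_eqI:
  assumes "0 < \<epsilon>" "continuous_on UNIV g"
    and "\<And>r. 0 < r \<Longrightarrow> r < \<epsilon> \<Longrightarrow> 0 \<notin> path_image (\<lambda>t. circlepath p r t - g (circlepath p r t))"
    and "\<And>r. 0 < r \<Longrightarrow> r < \<epsilon> \<Longrightarrow> winding_number (\<lambda>t. circlepath p r t - g (circlepath p r t)) 0 = of_int k"
  shows "fp_index g p = k"
proof -
  have circle: "(\<lambda>t. let x = p + complex_of_real r * exp (2 * pi * \<i> * complex_of_real t) in x - g x)
      = (\<lambda>t. circlepath p r t - g (circlepath p r t))" for r
    by (simp add: circlepath Let_def)
  have lift: "winding_lift (\<lambda>t. circlepath p r t - g (circlepath p r t)) 0 = of_int k"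
    if "0 < r" "r < \<epsilon>" for r
  proof -
    have "path (\<lambda>t. circlepath p r t - g (circlepath p r t))"
      using path_circlepath assms(2) unfolding path_def
      by (intro continuous_intros continuous_on_compose2[OF assms(2)]) auto
    with assms(3,4)[OF that] show ?thesis
      by (simp add: winding_lift_eq_winding_number)
  qed
  show ?thesis
    unfolding fp_index_def circle
  proof (rule the_equality)
    show "\<exists>\<epsilon>>0. \<forall>r. 0 < r \<and> r < \<epsilon> \<longrightarrow>
        winding_lift (\<lambda>t. circlepath p r t - g (circlepath p r t)) 0 = real_of_int k"
      using assms(1) lift by blast
  next
    fix k'
    assume "\<exists>\<epsilon>'>0. \<forall>r. 0 < r \<and> r < \<epsilon>' \<longrightarrow>
        winding_lift (\<lambda>t. circlepath p r t - g (circlepath p r t)) 0 = real_of_int k'"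
    then obtain \<epsilon>' where "0 < \<epsilon>'" and "\<And>r. 0 < r \<Longrightarrow> r < \<epsilon>' \<Longrightarrow>
        winding_lift (\<lambda>t. circlepath p r t - g (circlepath p r t)) 0 = real_of_int k'"
      by blast
    with lift[of "min \<epsilon> \<epsilon>' / 2"] assms(1) show "k' = k" by simp
  qed
qed

lemma winding_number_mult:
  assumes "path f" "0 \<notin> path_image f" "path g" "0 \<notin> path_image g"
  shows "winding_number (\<lambda>t. f t * g t) 0 = winding_number f 0 + winding_number g 0"
proof -
  obtain q where q: "path q" "pathfinish q - pathstart q = 2 * of_real pi * \<i> * winding_number f 0"
    "\<And>t. t \<in> {0..1} \<Longrightarrow> f t = 0 + exp (q t)"
    using winding_number_as_continuous_log[OF assms(1,2)] by blast
  obtain q' where q': "path q'" "pathfinish q' - pathstart q' = 2 * of_real pi * \<i> * winding_number g 0"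
    "\<And>t. t \<in> {0..1} \<Longrightarrow> g t = 0 + exp (q' t)"
    using winding_number_as_continuous_log[OF assms(3,4)] by blast
  have "path (\<lambda>t. q t + q' t)"
    using q(1) q'(1) unfolding path_def by (intro continuous_intros)
  moreover have "winding_number (\<lambda>t. f t * g t) 0 = winding_number (exp \<circ> (\<lambda>t. q t + q' t)) 0"
    by (rule winding_number_cong) (simp add: q(3) q'(3) exp_add)
  ultimately have "winding_number (\<lambda>t. f t * g t) 0
      = ((pathfinish q - pathstart q) + (pathfinish q' - pathstart q')) / (2 * of_real pi * \<i>)"
    by (simp add: winding_number_compose_exp pathfinish_def pathstart_def algebra_simps)
  also have "\<dots> = winding_number f 0 + winding_number g 0"
    using q(2) q'(2) by (simp add: field_simps)
  finally show ?thesis .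
qed

lemma winding_number_prod:
  assumes "finite S" "\<And>i. i \<in> S \<Longrightarrow> path (h i)" "\<And>i. i \<in> S \<Longrightarrow> 0 \<notin> path_image (h i)"
  shows "winding_number (\<lambda>t. \<Prod>i\<in>S. h i t) 0 = (\<Sum>i\<in>S. winding_number (h i) 0)"
  using assms
proof (induction S rule: finite_induct)
  case empty
  then show ?case by (simp add: winding_number_zero_const)
next
  case (insert j S)
  have "path (\<lambda>t. \<Prod>i\<in>S. h i t)"
    using insert.prems(1) unfolding path_def by (intro continuous_intros) auto
  moreover have "0 \<notin> path_image (\<lambda>t. \<Prod>i\<in>S. h i t)"
    using insert.prems(2) insert.hyps(1) by (auto simp: path_image_def image_iff)
  ultimately show ?case
    using insert winding_number_mult[of "h j" "\<lambda>t. \<Prod>i\<in>S. h i t"] by simp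
qed

lemma prod_one_minus_disjoint_support:
  fixes b :: "'i \<Rightarrow> 'a::comm_ring_1"
  assumes "finite S" "\<And>i j. i \<in> S \<Longrightarrow> j \<in> S \<Longrightarrow> i \<noteq> j \<Longrightarrow> b i * b j = 0"
  shows "(\<Prod>i\<in>S. 1 - b i) = 1 - (\<Sum>i\<in>S. b i)"
  using assms
proof (induction S rule: finite_induct)
  case (insert j S)
  then have "b j * (\<Sum>i\<in>S. b i) = 0"
    by (auto simp: sum_distrib_left intro: sum.neutral)
  moreover have "(\<Prod>i\<in>S. 1 - b i) = 1 - (\<Sum>i\<in>S. b i)"
    using insert by blast
  moreover have "(1 - b j) * (1 - (\<Sum>i\<in>S. b i)) = 1 - (b j + (\<Sum>i\<in>S. b i)) + b j * (\<Sum>i\<in>S. b i)"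
    by (simp add: algebra_simps)
  ultimately show ?case
    using insert.hyps by simp
qed simp

lemma exists_inj_unit_vectors: "\<exists>u :: 'a::countable \<Rightarrow> complex. inj u \<and> (\<forall>p. cmod (u p) = 1)"
proof -
  have "uncountable (sphere (0::complex) 1)"
    by (rule connected_uncountable[of _ 1 "-1"]) (auto intro: connected_sphere)
  then obtain f :: "nat \<Rightarrow> complex" where "inj f" "range f \<subseteq> sphere 0 1"
    using infinite_countable_subset countable_finite by blast
  then show ?thesis
    by (intro exI[of _ "f \<circ> to_nat"]) (auto simp: inj_compose subset_iff)
qed

lemma finite_inj_on_separated:
  fixes u :: "'a \<Rightarrow> 'b::metric_space"
  assumes "finite P" "inj_on u P"
  shows "\<exists>\<rho>>0. \<forall>p\<in>P. \<forall>q\<in>P. p \<noteq> q \<longrightarrow> 2 * \<rho> \<le> dist (u p) (u q)"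
proof -
  define D where "D = (\<lambda>(p, q). dist (u p) (u q)) ` {(p, q) \<in> P \<times> P. p \<noteq> q}"
  have "finite D"
    unfolding D_def using assms(1) by (auto intro: finite_subset[of _ "P \<times> P"])
  moreover have "\<forall>d\<in>D. 0 < d"
    using assms(2) by (auto simp: D_def inj_on_def)
  moreover have "dist (u p) (u q) \<in> D" if "p \<in> P" "q \<in> P" "p \<noteq> q" for p q
    using that by (auto simp: D_def)
  ultimately show ?thesis
    by (intro exI[of _ "Min (insert 1 D) / 2"]) auto
qed

lemma circlepath_loop: "circlepath z r 1 = circlepath z r 0"
  using pathstart_circlepath[of z r] pathfinish_circlepath[of z r]
  by (simp add: pathstart_def pathfinish_def)

lemma continuous_on_compose_circlepath:
  "continuous_on UNIV F \<Longrightarrow> continuous_on {0..1} (\<lambda>t. F (circlepath z r t))"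
  using continuous_on_compose2[OF _ path_circlepath[unfolded path_def], of UNIV F] by simp

lemma norm_circlepath: "0 \<le> r \<Longrightarrow> cmod (circlepath 0 r t) = r"
  by (simp add: circlepath norm_mult)

lemma orbit_funpow:
  assumes "\<And>k. f (s k) = s (k + 1)"
  shows "s (k + int m) = (f ^^ m) (s k)"
proof (induction m)
  case (Suc m)
  have "s (k + int (Suc m)) = s (k + int m + 1)"
    by (simp add: algebra_simps)
  then show ?case
    using Suc assms[of "k + int m"] by simp
qed simp

locale petal_system =
  fixes P :: "'p set" and \<sigma> :: "'p \<Rightarrow> 'p" and u :: "'p \<Rightarrow> complex" and \<rho> :: real
  assumes finite_P: "finite P" and rho_pos: "0 < \<rho>"
    and unit: "\<And>p. p \<in> P \<Longrightarrow> cmod (u p) = 1"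
    and separated: "\<And>p q. p \<in> P \<Longrightarrow> q \<in> P \<Longrightarrow> p \<noteq> q \<Longrightarrow> 2 * \<rho> \<le> cmod (u p - u q)"
    and maps_to: "\<And>p. p \<in> P \<Longrightarrow> \<sigma> p \<in> P"
begin

text \<open>A tent function that equals \<open>cmod z\<close> on the ray through \<open>u p\<close> and vanishes outside
  a sector of angular width about \<open>\<rho>\<close> around it; by \<open>separated\<close> the sectors of distinct
  \<open>p\<close> are disjoint.\<close>
definition petal :: "'p \<Rightarrow> complex \<Rightarrow> real" where
  "petal p z = max 0 (cmod z - cmod (z - cmod z *\<^sub>R u p) / \<rho>)"

definition petal_term :: "nat \<Rightarrow> 'p \<Rightarrow> complex \<Rightarrow> complex" where
  "petal_term n p z = (2 ^ n * petal p z) *\<^sub>R u ((\<sigma> ^^ n) p)"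

definition petal_power :: "nat \<Rightarrow> complex \<Rightarrow> complex" where
  "petal_power n z = (\<Sum>p\<in>P. petal_term n p z)"

abbreviation petal_map :: "complex \<Rightarrow> complex" where
  "petal_map \<equiv> petal_power 1"

lemma petal_nonneg: "0 \<le> petal p z"
  by (simp add: petal_def)

lemma funpow_maps_to: "p \<in> P \<Longrightarrow> (\<sigma> ^^ n) p \<in> P"
  by (induction n) (auto intro: maps_to)

lemma petal_disjoint:
  assumes "p \<in> P" "q \<in> P" "p \<noteq> q"
  shows "petal p z = 0 \<or> petal q z = 0"
proof (rule ccontr)
  assume "\<not> (petal p z = 0 \<or> petal q z = 0)"
  then have "cmod (z - cmod z *\<^sub>R u p) / \<rho> < cmod z" "cmod (z - cmod z *\<^sub>R u q) / \<rho> < cmod z"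
    by (auto simp: petal_def)
  then have "cmod (z - cmod z *\<^sub>R u p) < \<rho> * cmod z" "cmod (z - cmod z *\<^sub>R u q) < \<rho> * cmod z"
    using rho_pos by (simp_all add: pos_divide_less_eq mult.commute)
  moreover have "cmod z * cmod (u p - u q) \<le> cmod (z - cmod z *\<^sub>R u q) + cmod (z - cmod z *\<^sub>R u p)"
    using norm_triangle_ineq4[of "z - cmod z *\<^sub>R u q" "z - cmod z *\<^sub>R u p"]
    by (simp add: algebra_simps flip: scaleR_diff_right)
  moreover have "2 * (\<rho> * cmod z) \<le> cmod z * cmod (u p - u q)"
    using mult_left_mono[OF separated[OF assms], of "cmod z"] by (simp add: mult_ac)
  ultimately show False by linarith
qed

lemma petal_ray:
  assumes "p \<in> P" "q \<in> P" "0 \<le> c"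
  shows "petal p (c *\<^sub>R u q) = (if p = q then c else 0)"
proof -
  have norm_ray: "cmod (c *\<^sub>R u q) = c"
    using unit[OF assms(2)] assms(3) by simp
  have "c * \<rho> \<le> cmod (c *\<^sub>R u q - c *\<^sub>R u p)" if "p \<noteq> q"
    using separated[OF assms(2,1)] that assms(3) rho_pos
    by (simp add: mult_left_mono flip: scaleR_diff_right)
  then show ?thesis
    using norm_ray rho_pos assms(3) by (auto simp: petal_def field_simps max_def)
qed

lemma petal_power_single:
  assumes "p0 \<in> P" "0 < petal p0 z"
  shows "petal_power n z = petal_term n p0 z"
proof -
  have "petal_term n p z = 0" if "p \<in> P" "p \<noteq> p0" for p
  proof -
    have "petal p z = 0"
      using petal_disjoint[OF that(1) assms(1) that(2), where z = z] assms(2) by auto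
    then show ?thesis by (simp add: petal_term_def)
  qed
  then show ?thesis
    unfolding petal_power_def using finite_P assms(1) by (simp add: sum.remove)
qed

lemma petal_power_outside: "\<forall>p\<in>P. petal p z = 0 \<Longrightarrow> petal_power n z = 0"
  by (simp add: petal_power_def petal_term_def)

lemma petal_power_zero [simp]: "petal_power n 0 = 0"
  by (simp add: petal_power_outside petal_def)

lemma petal_power_ray:
  assumes "q \<in> P" "0 \<le> c"
  shows "petal_power n (c *\<^sub>R u q) = (2 ^ n * c) *\<^sub>R u ((\<sigma> ^^ n) q)"
proof (cases "c = 0")
  case True
  then show ?thesis by (simp add: petal_power_outside petal_def)
next
  case False
  then show ?thesis
    using petal_power_single[of q] petal_ray[OF assms(1) assms(1,2)] assms
    by (simp add: petal_term_def)
qed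

lemma petal_map_funpow: "1 \<le> n \<Longrightarrow> (petal_map ^^ n) z = petal_power n z"
proof (induction n rule: nat_induct_at_least)
  case (Suc n)
  show ?case
  proof (cases "\<exists>p0\<in>P. 0 < petal p0 z")
    case True
    then obtain p0 where p0: "p0 \<in> P" "0 < petal p0 z" by blast
    then show ?thesis
      using Suc.IH petal_power_single[OF p0] petal_power_ray[OF funpow_maps_to[OF p0(1)], of _ 1]
      by (simp add: petal_term_def petal_nonneg)
  next
    case False
    then have "\<forall>p\<in>P. petal p z = 0"
      using petal_nonneg by (force simp: order_less_le)
    then show ?thesis
      using Suc.IH by (simp add: petal_power_outside)
  qed
qed simp

lemma norm_petal_power: "cmod (petal_power n z) = 2 ^ n * cmod (petal_power 0 z)"
proof (cases "\<exists>p0\<in>P. 0 < petal p0 z")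
  case True
  then obtain p0 where "p0 \<in> P" "0 < petal p0 z" by blast
  then show ?thesis
    using petal_power_single unit funpow_maps_to by (simp add: petal_term_def petal_nonneg)
next
  case False
  then have "\<forall>p\<in>P. petal p z = 0"
    using petal_nonneg by (force simp: order_less_le)
  then show ?thesis
    by (simp add: petal_power_outside)
qed

lemma continuous_on_petal_term: "continuous_on UNIV (petal_term n p)"
  unfolding petal_term_def petal_def by (intro continuous_intros) (use rho_pos in auto)

lemma continuous_on_petal_power: "continuous_on UNIV (petal_power n)"
  unfolding petal_power_def by (intro continuous_intros continuous_on_petal_term)


text \<open>A zero of the linear homotopy used below would lie on the ray through \<open>u (\<sigma>\<^sup>n p)\<close>,
  where \<open>petal p\<close> is known exactly.\<close>
lemma petal_homotopy_nonzero:
  assumes "1 \<le> n" "p \<in> P" "z \<noteq> 0" "0 \<le> s" "s \<le> 1"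
  shows "z \<noteq> ((1 - s) * (2 ^ n * petal p z) + s * (if (\<sigma> ^^ n) p = p then 2 ^ n * cmod z else 0))
      *\<^sub>R u ((\<sigma> ^^ n) p)"
proof
  define \<mu> where "\<mu> = (1 - s) * (2 ^ n * petal p z) + s * (if (\<sigma> ^^ n) p = p then 2 ^ n * cmod z else 0)"
  assume "z = \<mu> *\<^sub>R u ((\<sigma> ^^ n) p)"
  moreover have "0 \<le> \<mu>"
    unfolding \<mu>_def using assms(4,5) petal_nonneg by (intro add_nonneg_nonneg mult_nonneg_nonneg) auto
  ultimately have petal_z: "petal p z = (if p = (\<sigma> ^^ n) p then \<mu> else 0)" and norm_z: "cmod z = \<mu>"
    using petal_ray assms(2) funpow_maps_to unit by auto
  have "\<mu> = 2 ^ n * \<mu>"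
  proof (cases "(\<sigma> ^^ n) p = p")
    case True
    then have "\<mu> = (1 - s) * (2 ^ n * petal p z) + s * (2 ^ n * cmod z)"
      using \<mu>_def by simp
    also have "\<dots> = 2 ^ n * \<mu>"
      using True petal_z norm_z by (simp add: algebra_simps)
    finally show ?thesis .
  next
    case False
    then have "\<mu> = (1 - s) * (2 ^ n * petal p z)"
      using \<mu>_def by simp
    with False petal_z show ?thesis by simp
  qed
  moreover have "(1::real) < 2 ^ n"
    using assms(1) by (intro one_less_power) auto
  ultimately show False
    using assms(3) norm_z by simp
qed

text \<open>For a petal fixed by \<open>\<sigma>\<^sup>n\<close> the loop deforms to the circle translated by
  \<open>2\<^sup>n r u p\<close>, which no longer surrounds 0.\<close>
lemma winding_number_circle_minus_petal_term:
  assumes "1 \<le> n" "p \<in> P" "0 < r"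
  shows "winding_number (\<lambda>t. circlepath 0 r t - petal_term n p (circlepath 0 r t)) 0
      = (if (\<sigma> ^^ n) p = p then 0 else 1)"
proof -
  define c where "c = (if (\<sigma> ^^ n) p = p then 2 ^ n * r else 0)"
  define g where "g t = circlepath 0 r t - petal_term n p (circlepath 0 r t)" for t
  define h where "h t = circlepath 0 r t - c *\<^sub>R u ((\<sigma> ^^ n) p)" for t
  have "continuous_on {0..1} (\<lambda>t. petal_term n p (circlepath 0 r t))"
    by (rule continuous_on_compose_circlepath[OF continuous_on_petal_term])
  then have "path g" "path h"
    using path_circlepath[of 0 r] unfolding g_def h_def path_def by (auto intro!: continuous_intros)
  moreover have "pathfinish g = pathstart g" "pathfinish h = pathstart h"
    by (simp_all add: g_def h_def pathstart_def pathfinish_def circlepath_loop)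
  moreover have "0 \<notin> closed_segment (g t) (h t)" for t
  proof
    assume "0 \<in> closed_segment (g t) (h t)"
    then obtain s where s: "0 \<le> s" "s \<le> 1" "(1 - s) *\<^sub>R g t + s *\<^sub>R h t = 0"
      by (auto simp: closed_segment_def)
    have "(1 - s) *\<^sub>R g t + s *\<^sub>R h t = circlepath 0 r t
        - ((1 - s) * (2 ^ n * petal p (circlepath 0 r t)) + s * c) *\<^sub>R u ((\<sigma> ^^ n) p)"
      by (simp add: g_def h_def petal_term_def algebra_simps)
    moreover have "circlepath 0 r t \<noteq> 0"
      using norm_circlepath[of r t] assms(3) by auto
    from petal_homotopy_nonzero[OF assms(1,2) this s(1,2)]
    have "circlepath 0 r t \<noteq> ((1 - s) * (2 ^ n * petal p (circlepath 0 r t)) + s * c) *\<^sub>R u ((\<sigma> ^^ n) p)"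
      unfolding norm_circlepath[OF less_imp_le[OF assms(3)]] c_def by simp
    ultimately show False
      using s(3) by simp
  qed
  ultimately have "winding_number g 0 = winding_number h 0"
    by (intro winding_number_loops_linear_eq) (auto simp: closed_segment_commute)
  also have "\<dots> = winding_number (circlepath 0 r) (c *\<^sub>R u ((\<sigma> ^^ n) p))"
    unfolding h_def by (rule winding_number_offset[symmetric])
  also have "\<dots> = (if (\<sigma> ^^ n) p = p then 0 else 1)"
  proof (cases "(\<sigma> ^^ n) p = p")
    case True
    have "r < 2 ^ n * r"
      using assms(1,3) by (simp add: one_less_power)
    then have "c *\<^sub>R u ((\<sigma> ^^ n) p) \<notin> cball 0 r"
      using True unit[OF assms(2)] assms(3) by (simp add: c_def)
    then have "winding_number (circlepath 0 r) (c *\<^sub>R u ((\<sigma> ^^ n) p)) = 0"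
      using assms(3) by (intro winding_number_zero_outside[of _ "cball 0 r"]) auto
    with True show ?thesis by simp
  next
    case False
    then show ?thesis
      using assms(3) by (simp add: c_def winding_number_circlepath_centre)
  qed
  finally show ?thesis
    unfolding g_def .
qed


lemma circle_minus_petal_term_nonzero: "1 \<le> n \<Longrightarrow> p \<in> P \<Longrightarrow> z \<noteq> 0 \<Longrightarrow> z - petal_term n p z \<noteq> 0"
  using petal_homotopy_nonzero[of n p z 0] by (simp add: petal_term_def)

lemma winding_number_circle_minus_petal_power:
  assumes "1 \<le> n" "0 < r"
  shows "0 \<notin> path_image (\<lambda>t. circlepath 0 r t - petal_power n (circlepath 0 r t))"
    and "winding_number (\<lambda>t. circlepath 0 r t - petal_power n (circlepath 0 r t)) 0
      = 1 - of_nat (card {p \<in> P. (\<sigma> ^^ n) p = p})"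
proof -
  let ?z = "circlepath 0 r"
  define h where "h p t = 1 - petal_term n p (?z t) / ?z t" for p t
  have z_nonzero: "?z t \<noteq> 0" for t
    using norm_circlepath[of r t] assms(2) by auto
  have factor: "?z t - petal_term n p (?z t) = ?z t * h p t" for p t
    using z_nonzero[of t] by (simp add: h_def field_simps)
  have product: "?z t - petal_power n (?z t) = ?z t * (\<Prod>p\<in>P. h p t)" for t
  proof -
    have "(\<Prod>p\<in>P. h p t) = 1 - (\<Sum>p\<in>P. petal_term n p (?z t) / ?z t)"
      unfolding h_def
    proof (rule prod_one_minus_disjoint_support[OF finite_P])
      fix p q assume "p \<in> P" "q \<in> P" "p \<noteq> q"
      then show "petal_term n p (?z t) / ?z t * (petal_term n q (?z t) / ?z t) = 0"
        using petal_disjoint by (fastforce simp: petal_term_def)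
    qed
    then show ?thesis
      using z_nonzero[of t] by (simp add: petal_power_def sum_divide_distrib[symmetric] field_simps)
  qed
  have h_path: "path (h p)" for p
    unfolding h_def path_def using z_nonzero path_circlepath[of 0 r, unfolded path_def]
    by (intro continuous_intros continuous_on_compose_circlepath continuous_on_petal_term) auto
  have h_nonzero: "0 \<notin> path_image (h p)" if "p \<in> P" for p
    using factor circle_minus_petal_term_nonzero[OF assms(1) that z_nonzero]
    by (auto simp: path_image_def)
  have h_winding: "winding_number (h p) 0 = (if (\<sigma> ^^ n) p = p then -1 else 0)" if "p \<in> P" for p
  proof -
    have "winding_number (\<lambda>t. ?z t * h p t) 0 = winding_number ?z 0 + winding_number (h p) 0"
      using h_path h_nonzero[OF that] z_nonzero
      by (intro winding_number_mult) (auto simp: path_image_def)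
    moreover have "winding_number (\<lambda>t. ?z t * h p t) 0 = (if (\<sigma> ^^ n) p = p then 0 else 1)"
      using winding_number_circle_minus_petal_term[OF assms(1) that assms(2)] factor by simp
    ultimately show ?thesis
      using winding_number_circlepath_centre[OF assms(2)]
      by (auto split: if_splits simp: eq_neg_iff_add_eq_0 add.commute)
  qed
  show "0 \<notin> path_image (\<lambda>t. ?z t - petal_power n (?z t))"
    using product z_nonzero h_nonzero finite_P by (auto simp: path_image_def image_iff)
  have "winding_number (\<lambda>t. ?z t - petal_power n (?z t)) 0
      = winding_number ?z 0 + winding_number (\<lambda>t. \<Prod>p\<in>P. h p t) 0"
    unfolding product using h_path h_nonzero z_nonzero finite_P path_circlepath[of 0 r]
    by (intro winding_number_mult) (auto simp: path_def path_image_def image_iff intro!: continuous_intros)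
  also have "\<dots> = 1 + (\<Sum>p\<in>P. if (\<sigma> ^^ n) p = p then -1 else 0)"
    using winding_number_prod[OF finite_P h_path h_nonzero] h_winding
      winding_number_circlepath_centre[OF assms(2)] by simp
  also have "\<dots> = 1 - of_nat (card {p \<in> P. (\<sigma> ^^ n) p = p})"
    using finite_P by (simp add: sum.If_cases Int_def)
  finally show "winding_number (\<lambda>t. ?z t - petal_power n (?z t)) 0
      = 1 - of_nat (card {p \<in> P. (\<sigma> ^^ n) p = p})" .
qed


lemma fp_index_petal_map_funpow:
  assumes "1 \<le> n"
  shows "fp_index (petal_map ^^ n) 0 = 1 - int (card {p \<in> P. (\<sigma> ^^ n) p = p})"
proof -
  have "petal_map ^^ n = petal_power n"
    using petal_map_funpow[OF assms] by auto
  then show ?thesis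
    using winding_number_circle_minus_petal_power[OF assms] continuous_on_petal_power
    by (intro fp_index_eqI[of 1]) simp_all
qed

lemma isolated_invariant_set_petal_map: "isolated_invariant_set petal_map {0}"
  unfolding isolated_invariant_set_def
proof (intro exI[of _ "cball 0 1"] conjI)
  show "{0} = Inv petal_map (cball 0 1)"
  proof
    show "{0} \<subseteq> Inv petal_map (cball 0 1)"
      unfolding Inv_def by (auto intro!: exI[of _ "\<lambda>_. 0"])
    show "Inv petal_map (cball 0 1) \<subseteq> {0}"
    proof
      fix x assume "x \<in> Inv petal_map (cball 0 1)"
      then obtain s :: "int \<Rightarrow> complex" where "s 0 = x" "\<forall>k. s k \<in> cball 0 1 \<and> petal_map (s k) = s (k + 1)"
        unfolding Inv_def by blast
      then have s: "s 0 = x" "\<And>k. s k \<in> cball 0 1" "\<And>k. petal_map (s k) = s (k + 1)"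
        by auto
      define y where "y = s (-1)"
      have bounded: "2 ^ m * cmod (petal_power 0 y) \<le> 1" if "1 \<le> m" for m
        using s(2)[of "-1 + int m"] orbit_funpow[of petal_map s "-1" m, OF s(3)]
          petal_map_funpow[OF that] norm_petal_power[of m y]
        by (simp add: y_def)
      have "petal_power 0 y = 0"
      proof (rule ccontr)
        assume "petal_power 0 y \<noteq> 0"
        then obtain m where "1 / cmod (petal_power 0 y) < 2 ^ m"
          using real_arch_pow[of 2] by auto
        then have "1 < 2 ^ Suc m * cmod (petal_power 0 y)"
          using \<open>petal_power 0 y \<noteq> 0\<close> by (simp add: field_simps)
        with bounded[of "Suc m"] show False by simp
      qed
      then show "x \<in> {0}"
        using s(1) s(3)[of "-1"] norm_petal_power[of 1 y] by (simp add: y_def)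
    qed
  qed
qed simp_all

end

theorem exists_map_with_fp_index_of_iterates:
  fixes P :: "'p::countable set" and \<sigma> :: "'p \<Rightarrow> 'p"
  assumes "finite P" "\<And>p. p \<in> P \<Longrightarrow> \<sigma> p \<in> P"
  shows "\<exists>f. continuous_on UNIV f \<and> f 0 = 0 \<and> isolated_invariant_set f {0} \<and>
    (\<forall>n\<ge>1. fp_index (f ^^ n) 0 = 1 - int (card {p \<in> P. (\<sigma> ^^ n) p = p}))"
proof -
  obtain u :: "'p \<Rightarrow> complex" where u: "inj u" "\<And>p. cmod (u p) = 1"
    using exists_inj_unit_vectors by blast
  obtain \<rho> where "0 < \<rho>" "\<forall>p\<in>P. \<forall>q\<in>P. p \<noteq> q \<longrightarrow> 2 * \<rho> \<le> dist (u p) (u q)"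
    using finite_inj_on_separated[OF assms(1) inj_on_subset[OF u(1)]] by blast
  then interpret petal_system P \<sigma> u \<rho>
    using assms u by unfold_locales (auto simp: dist_norm)
  show ?thesis
    using continuous_on_petal_power isolated_invariant_set_petal_map fp_index_petal_map_funpow
    by (intro exI[of _ petal_map]) simp
qed

text \<open>\<open>(k, i, m)\<close> is the \<open>m\<close>-th point of the \<open>i\<close>-th cycle of length \<open>k\<close>.\<close>
definition cycle_shift :: "nat \<times> nat \<times> nat \<Rightarrow> nat \<times> nat \<times> nat" where
  "cycle_shift = (\<lambda>(k, i, m). (k, i, Suc m mod k))"

lemma funpow_cycle_shift: "m < k \<Longrightarrow> (cycle_shift ^^ n) (k, i, m) = (k, i, (m + n) mod k)"
  by (induction n) (auto simp: cycle_shift_def mod_Suc_eq)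

lemma add_mod_eq_self_iff: "m < (k::nat) \<Longrightarrow> (m + n) mod k = m \<longleftrightarrow> k dvd n"
proof -
  assume "m < k"
  then have "(m + n) mod k = m \<longleftrightarrow> (m + n) mod k = m mod k"
    by simp
  also have "\<dots> \<longleftrightarrow> k dvd n"
    using mod_eq_dvd_iff_nat[of m "m + n" k] by simp
  finally show ?thesis .
qed

lemma card_fixed_points_cycle_shift:
  assumes "finite F"
  shows "card {p \<in> Sigma F (\<lambda>k. {..<a k} \<times> {..<k}). (cycle_shift ^^ n) p = p}
      = (\<Sum>k\<in>{k \<in> F. k dvd n}. k * a k)"
proof -
  have "{p \<in> Sigma F (\<lambda>k. {..<a k} \<times> {..<k}). (cycle_shift ^^ n) p = p}
      = Sigma {k \<in> F. k dvd n} (\<lambda>k. {..<a k} \<times> {..<k})"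
    by (auto simp: funpow_cycle_shift add_mod_eq_self_iff)
  then show ?thesis
    using assms by (simp add: card_SigmaI card_cartesian_product mult.commute)
qed

theorem mainTheorem8:
  fixes F :: "nat set" and a :: "nat \<Rightarrow> nat"
  assumes "finite F" and "\<forall>k\<in>F. a k > 0"
  shows "\<exists>f :: complex \<Rightarrow> complex. continuous_on UNIV f \<and>
           (\<exists>p. f p = p \<and> isolated_invariant_set f {p} \<and>
              (\<forall>n\<ge>1. fp_index (f ^^ n) p = 1 - (\<Sum>k\<in>{k\<in>F. k dvd n}. int k * int (a k))))"
proof -
  define P where "P = Sigma F (\<lambda>k. {..<a k} \<times> {..<k})"
  have "finite P"
    unfolding P_def using assms(1) by auto
  moreover have "cycle_shift p \<in> P" if "p \<in> P" for p
    using that by (auto simp: P_def cycle_shift_def)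
  ultimately obtain f where "continuous_on UNIV f" "f 0 = 0" "isolated_invariant_set f {0}"
      "\<forall>n\<ge>1. fp_index (f ^^ n) 0 = 1 - int (card {p \<in> P. (cycle_shift ^^ n) p = p})"
    using exists_map_with_fp_index_of_iterates by blast
  then show ?thesis
    using card_fixed_points_cycle_shift[OF assms(1)] unfolding P_def
    by (intro exI[of _ f] conjI exI[of _ 0]) (simp_all add: of_nat_sum)
qed

end
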